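(* Let $\Omega$ be strictly convex. For a trajectory $X(s)=x+(s-t)v$, $V(s)=v$, define $$\alpha(s)=\xi^2(X(s))+[V(s)\cdot\nabla\xi(X(s))]^2-2\{V(s)\cdot\nabla^2\xi(X(s))\cdot V(s)\}\xi(X(s)).$$ Suppose $X(s)\in\bar\Omega$ for $t_1\le s\le t_2$. Then there exists a constant $C_\xi>0$ (depending only on $\xi$) such that $$e^{C_\xi(|V(t_1)|+1)t_1}\alpha(t_1)\le e^{C_\xi(|V(t_1)|+1)t_2}\alpha(t_2),\qquad e^{-C_\xi(|V(t_1)|+1)t_1}\alpha(t_1)\ge e^{-C_\xi(|V(t_1)|+1)t_2}\alpha(t_2).$$
   Context: $\Omega=\{x\in\mathbb{R}^3:\xi(x)<0\}$ is connected and bounded, $\xi$ smooth with $\nabla\xi\neq0$ on $\{\xi=0\}$. Strictly convex means: there is $c_\xi>0$ with $\partial_{ij}\xi(x)\zeta^i\zeta^j\ge c_\xi|\zeta|^2$ for all $x$ with $\xi(x)\le0$ and all $\zeta\in\mathbb{R}^3$. *)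

theory Defs
  imports "HOL-Analysis.Analysis"
begin

fun iter_partial :: "3 list \<Rightarrow> (real^3 \<Rightarrow> real) \<Rightarrow> real^3 \<Rightarrow> real" where
  "iter_partial [] f = f"
| "iter_partial (i # is) f = (\<lambda>x. frechet_derivative (iter_partial is f) (at x) (axis i 1))"

definition smooth3 :: "(real^3 \<Rightarrow> real) \<Rightarrow> bool" where
  "smooth3 f \<longleftrightarrow> (\<forall>is x. iter_partial is f differentiable (at x))"

definition grad3 :: "(real^3 \<Rightarrow> real) \<Rightarrow> real^3 \<Rightarrow> real^3" where
  "grad3 f x = (\<chi> i. iter_partial [i] f x)"

definition hess3 :: "(real^3 \<Rightarrow> real) \<Rightarrow> real^3 \<Rightarrow> real^3^3" where
  "hess3 f x = (\<chi> i j. iter_partial [i, j] f x)"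

definition strictly_convex_domain :: "(real^3 \<Rightarrow> real) \<Rightarrow> bool" where
  "strictly_convex_domain \<xi> \<longleftrightarrow>
     (\<exists>c>0. \<forall>x \<zeta>. \<xi> x \<le> 0 \<longrightarrow> \<zeta> \<bullet> (hess3 \<xi> x *v \<zeta>) \<ge> c * (norm \<zeta>)^2)"

definition alpha :: "(real^3 \<Rightarrow> real) \<Rightarrow> real^3 \<Rightarrow> real \<Rightarrow> real^3 \<Rightarrow> real \<Rightarrow> real" where
  "alpha \<xi> x t v s =
     (let X = x + (s - t) *\<^sub>R v in
        (\<xi> X)^2 + (v \<bullet> grad3 \<xi> X)^2 - 2 * (v \<bullet> (hess3 \<xi> X *v v)) * \<xi> X)"

end

theory Submission
  imports Defs
begin

text \<open>Along the line X(s) = x + (s - t) v the derivative of \<alpha> is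
  2 \<xi> (v\<cdot>\<nabla>\<xi>) - 2 \<xi> D3\<xi>(X)[v,v,v]:
  the contributions of the gradient term and of the derivative of the Hessian term cancel.
  In the closed domain \<xi> \<le> 0, so by strict convexity the last summand of \<alpha> is at least
  2 c |v|^2 |\<xi>|, and in particular \<alpha> is a sum of three nonnegative terms. By AM-GM
  |2 \<xi> (v\<cdot>\<nabla>\<xi>)| is at most the first two of them, and the cubic term is at most (B/c) |v|
  times the third, B bounding the third derivatives of \<xi> on the compact closure.
  Hence |\<alpha>'| \<le> (1 + B/c)(|v| + 1) \<alpha>, and Gronwall's lemma applied in both directions
  gives the two inequalities.\<close>

lemma exp_weighted_monotone:
  fixes f f' :: "real \<Rightarrow> real"
  assumes "t1 \<le> t2"
    and deriv: "\<And>s. t1 \<le> s \<Longrightarrow> s \<le> t2 \<Longrightarrow> (f has_real_derivative f' s) (at s)"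
    and bound: "\<And>s. t1 \<le> s \<Longrightarrow> s \<le> t2 \<Longrightarrow> \<bar>f' s\<bar> \<le> K * f s"
  shows "exp (K * t1) * f t1 \<le> exp (K * t2) * f t2"
    and "exp (- K * t1) * f t1 \<ge> exp (- K * t2) * f t2"
proof -
  show "exp (K * t1) * f t1 \<le> exp (K * t2) * f t2"
  proof (rule DERIV_nonneg_imp_nondecreasing[OF \<open>t1 \<le> t2\<close>])
    fix s assume s: "t1 \<le> s" "s \<le> t2"
    have "((\<lambda>s. exp (K * s) * f s) has_real_derivative exp (K * s) * (K * f s + f' s)) (at s)"
      by (auto intro!: derivative_eq_intros deriv[OF s] simp: algebra_simps)
    moreover have "exp (K * s) * (K * f s + f' s) \<ge> 0"
      using bound[OF s] by (intro mult_nonneg_nonneg) auto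
    ultimately show "\<exists>y. ((\<lambda>s. exp (K * s) * f s) has_real_derivative y) (at s) \<and> 0 \<le> y"
      by blast
  qed
  show "exp (- K * t1) * f t1 \<ge> exp (- K * t2) * f t2"
  proof (rule DERIV_nonpos_imp_nonincreasing[OF \<open>t1 \<le> t2\<close>])
    fix s assume s: "t1 \<le> s" "s \<le> t2"
    have "((\<lambda>s. exp (- K * s) * f s) has_real_derivative exp (- K * s) * (f' s - K * f s)) (at s)"
      by (auto intro!: derivative_eq_intros deriv[OF s] simp: algebra_simps)
    moreover have "exp (- K * s) * (f' s - K * f s) \<le> 0"
      using bound[OF s] by (intro mult_nonneg_nonpos) auto
    ultimately show "\<exists>y. ((\<lambda>s. exp (- K * s) * f s) has_real_derivative y) (at s) \<and> y \<le> 0"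
      by blast
  qed
qed

lemma linear_eq_sum_axis:
  fixes F :: "real^'n \<Rightarrow> real"
  assumes "linear F"
  shows "F v = (\<Sum>i\<in>UNIV. v$i * F (axis i 1))"
proof -
  have "F v = F (\<Sum>i\<in>UNIV. v$i *\<^sub>R axis i 1)"
    using basis_expansion[of v] by (simp add: scalar_mult_eq_scaleR)
  also have "\<dots> = (\<Sum>i\<in>UNIV. v$i * F (axis i 1))"
    using assms by (simp add: linear_sum linear_scale)
  finally show ?thesis .
qed

lemma has_real_derivative_along_line:
  fixes f :: "real^3 \<Rightarrow> real"
  assumes "f differentiable (at (x + (s - t) *\<^sub>R v))"
  shows "((\<lambda>s. f (x + (s - t) *\<^sub>R v)) has_real_derivative
           (\<Sum>i\<in>UNIV. v$i * iter_partial [i] f (x + (s - t) *\<^sub>R v))) (at s)"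
proof -
  let ?F = "frechet_derivative f (at (x + (s - t) *\<^sub>R v))"
  have f': "(f has_derivative ?F) (at (x + (s - t) *\<^sub>R v))"
    using assms frechet_derivative_works by blast
  have lin: "linear ?F"
    using assms linear_frechet_derivative by blast
  have line: "((\<lambda>s. x + (s - t) *\<^sub>R v) has_derivative (\<lambda>h. h *\<^sub>R v)) (at s)"
    by (auto intro!: derivative_eq_intros simp: algebra_simps)
  have "((\<lambda>s. f (x + (s - t) *\<^sub>R v)) has_derivative (\<lambda>h. ?F (h *\<^sub>R v))) (at s)"
    using has_derivative_compose[OF line f'] by (simp add: o_def)
  moreover have "(\<lambda>h. ?F (h *\<^sub>R v)) = (*) (\<Sum>i\<in>UNIV. v$i * iter_partial [i] f (x + (s - t) *\<^sub>R v))"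
    using linear_eq_sum_axis[OF lin, of v] by (auto simp: linear_scale[OF lin] mult.commute)
  ultimately show ?thesis
    by (simp add: has_field_derivative_def)
qed

lemma iter_partial_along_line:
  assumes "smooth3 \<xi>"
  shows "((\<lambda>s. iter_partial is \<xi> (x + (s - t) *\<^sub>R v)) has_real_derivative
           (\<Sum>j\<in>UNIV. v$j * iter_partial (j # is) \<xi> (x + (s - t) *\<^sub>R v))) (at s)"
  using has_real_derivative_along_line[of "iter_partial is \<xi>" x s t v] assms
  unfolding smooth3_def by simp

lemma hess3_quadratic_form:
  "v \<bullet> (hess3 \<xi> y *v v) = (\<Sum>i\<in>UNIV. v$i * (\<Sum>j\<in>UNIV. v$j * iter_partial [j, i] \<xi> y))"
proof -
  have "v \<bullet> (hess3 \<xi> y *v v) = (\<Sum>i\<in>UNIV. \<Sum>j\<in>UNIV. v$i * v$j * iter_partial [i, j] \<xi> y)"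
    by (simp add: inner_vec_def hess3_def matrix_vector_mult_def sum_distrib_left algebra_simps
        del: iter_partial.simps)
  also have "\<dots> = (\<Sum>j\<in>UNIV. \<Sum>i\<in>UNIV. v$i * v$j * iter_partial [i, j] \<xi> y)"
    by (rule sum.swap)
  also have "\<dots> = (\<Sum>i\<in>UNIV. v$i * (\<Sum>j\<in>UNIV. v$j * iter_partial [j, i] \<xi> y))"
    by (simp add: sum_distrib_left algebra_simps del: iter_partial.simps)
  finally show ?thesis .
qed

lemma alpha_eq_sums:
  "alpha \<xi> x t v s =
     (\<xi> (x + (s - t) *\<^sub>R v))^2 + (\<Sum>i\<in>UNIV. v$i * iter_partial [i] \<xi> (x + (s - t) *\<^sub>R v))^2
     - 2 * (\<Sum>i\<in>UNIV. v$i * (\<Sum>j\<in>UNIV. v$j * iter_partial [j, i] \<xi> (x + (s - t) *\<^sub>R v)))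
         * \<xi> (x + (s - t) *\<^sub>R v)"
  using hess3_quadratic_form[of v \<xi> "x + (s - t) *\<^sub>R v"]
  by (simp add: alpha_def Let_def inner_vec_def grad3_def del: iter_partial.simps)

lemma alpha_has_real_derivative:
  fixes x v :: "real^3" and t s :: real
  assumes "smooth3 \<xi>"
  defines "a \<equiv> \<lambda>s. \<xi> (x + (s - t) *\<^sub>R v)"
    and "G \<equiv> \<lambda>s. \<Sum>i\<in>UNIV. v$i * iter_partial [i] \<xi> (x + (s - t) *\<^sub>R v)"
    and "T \<equiv> \<lambda>s. \<Sum>i\<in>UNIV. v$i * (\<Sum>j\<in>UNIV. v$j * (\<Sum>k\<in>UNIV. v$k *
                    iter_partial [k, j, i] \<xi> (x + (s - t) *\<^sub>R v)))"
  shows "((\<lambda>s. alpha \<xi> x t v s) has_real_derivative (2 * a s * G s - 2 * T s * a s)) (at s)"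
proof -
  define Q where "Q \<equiv> \<lambda>s. \<Sum>i\<in>UNIV. v$i * (\<Sum>j\<in>UNIV. v$j * iter_partial [j, i] \<xi> (x + (s - t) *\<^sub>R v))"
  have a': "(a has_real_derivative G s) (at s)" for s
    using iter_partial_along_line[OF assms(1), of "[]"] unfolding a_def G_def by simp
  have G': "(G has_real_derivative Q s) (at s)" for s
    unfolding G_def Q_def by (intro DERIV_sum DERIV_cmult iter_partial_along_line[OF assms(1)])
  have Q': "(Q has_real_derivative T s) (at s)" for s
    unfolding T_def Q_def by (intro DERIV_sum DERIV_cmult iter_partial_along_line[OF assms(1)])
  have "(\<lambda>s. alpha \<xi> x t v s) = (\<lambda>s. (a s)^2 + (G s)^2 - 2 * Q s * a s)"
    by (simp add: alpha_eq_sums a_def G_def Q_def)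
  moreover have "((\<lambda>s. (a s)^2 + (G s)^2 - 2 * Q s * a s) has_real_derivative
     (2 * a s * G s + 2 * G s * Q s - 2 * (T s * a s + Q s * G s))) (at s)"
    by (auto intro!: derivative_eq_intros a' G' Q' simp: algebra_simps)
  ultimately show ?thesis
    by (simp add: algebra_simps)
qed

lemma abs_sum_mult_le:
  fixes v f :: "'a \<Rightarrow> real"
  assumes "\<And>i. i \<in> A \<Longrightarrow> \<bar>v i\<bar> \<le> n"
  shows "\<bar>\<Sum>i\<in>A. v i * f i\<bar> \<le> n * (\<Sum>i\<in>A. \<bar>f i\<bar>)"
proof -
  have "\<bar>\<Sum>i\<in>A. v i * f i\<bar> \<le> (\<Sum>i\<in>A. \<bar>v i * f i\<bar>)"
    by (rule sum_abs)
  also have "\<dots> \<le> (\<Sum>i\<in>A. n * \<bar>f i\<bar>)"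
    by (intro sum_mono) (simp add: abs_mult assms mult_right_mono)
  finally show ?thesis
    by (simp add: sum_distrib_left)
qed

lemma abs_cubic_form_le:
  fixes v :: "real^'n"
  shows "\<bar>\<Sum>i\<in>UNIV. v$i * (\<Sum>j\<in>UNIV. v$j * (\<Sum>k\<in>UNIV. v$k * a k j i))\<bar>
     \<le> (norm v)^3 * (\<Sum>i\<in>UNIV. \<Sum>j\<in>UNIV. \<Sum>k\<in>UNIV. \<bar>a k j i\<bar>)"
proof -
  let ?n = "norm v"
  have v: "\<And>i. i \<in> UNIV \<Longrightarrow> \<bar>v$i\<bar> \<le> ?n"
    by (rule component_le_norm_cart)
  have "\<bar>\<Sum>i\<in>UNIV. v$i * (\<Sum>j\<in>UNIV. v$j * (\<Sum>k\<in>UNIV. v$k * a k j i))\<bar>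
      \<le> ?n * (\<Sum>i\<in>UNIV. \<bar>\<Sum>j\<in>UNIV. v$j * (\<Sum>k\<in>UNIV. v$k * a k j i)\<bar>)"
    by (rule abs_sum_mult_le[OF v])
  also have "\<dots> \<le> ?n * (\<Sum>i\<in>UNIV. ?n * (\<Sum>j\<in>UNIV. \<bar>\<Sum>k\<in>UNIV. v$k * a k j i\<bar>))"
    by (intro mult_left_mono sum_mono abs_sum_mult_le[OF v] norm_ge_zero)
  also have "\<dots> \<le> ?n * (\<Sum>i\<in>UNIV. ?n * (\<Sum>j\<in>UNIV. ?n * (\<Sum>k\<in>UNIV. \<bar>a k j i\<bar>)))"
    by (intro mult_left_mono sum_mono abs_sum_mult_le[OF v] norm_ge_zero)
  also have "\<dots> = ?n^3 * (\<Sum>i\<in>UNIV. \<Sum>j\<in>UNIV. \<Sum>k\<in>UNIV. \<bar>a k j i\<bar>)"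
    by (simp add: sum_distrib_left power3_eq_cube mult.assoc)
  finally show ?thesis .
qed

text \<open>The pointwise estimate on \<alpha>', with a = \<xi>, g = v\<cdot>\<nabla>\<xi>, q the Hessian quadratic form,
  T the cubic form of the third derivatives and n = |v|.\<close>

lemma abs_alpha_derivative_le:
  fixes a g q T c M n :: real
  assumes a: "a \<le> 0" and q: "q \<ge> c * n^2" and c: "c > 0" and T: "\<bar>T\<bar> \<le> M * n^3"
    and M: "M \<ge> 0" and n: "n \<ge> 0"
  shows "\<bar>2 * a * g - 2 * T * a\<bar> \<le> (1 + M / c) * (n + 1) * (a^2 + g^2 - 2 * q * a)"
proof -
  define P1 where "P1 = a^2 + g^2"
  define P2 where "P2 = - 2 * q * a"
  have "q \<ge> 0"
    using q c by (metis mult_nonneg_nonneg less_imp_le zero_le_power2 order_trans)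
  then have P2: "P2 \<ge> 0"
    unfolding P2_def using a by (simp add: mult_nonneg_nonpos)
  have P1: "P1 \<ge> 0"
    unfolding P1_def by simp
  have Mc: "M / c \<ge> 0"
    using M c by simp
  have amgm: "\<bar>2 * a * g\<bar> \<le> P1"
  proof -
    have "0 \<le> (\<bar>a\<bar> - \<bar>g\<bar>)^2" by simp
    then show ?thesis unfolding P1_def by (simp add: power2_eq_square abs_mult algebra_simps)
  qed
  have cubic: "\<bar>2 * T * a\<bar> \<le> (M / c) * n * P2"
  proof -
    have "\<bar>2 * T * a\<bar> = 2 * \<bar>T\<bar> * (-a)"
      using a by (simp add: abs_mult)
    also have "\<dots> \<le> 2 * (M * n^3) * (-a)"
      using T a by (intro mult_right_mono mult_left_mono) auto
    also have "\<dots> = (M / c) * n * (2 * (c * n^2) * (-a))"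
      using c by (simp add: power2_eq_square power3_eq_cube field_simps)
    also have "\<dots> \<le> (M / c) * n * (2 * q * (-a))"
      using q a M c n by (intro mult_left_mono mult_right_mono) auto
    also have "\<dots> = (M / c) * n * P2"
      unfolding P2_def by simp
    finally show ?thesis .
  qed
  have one: "1 \<le> (1 + M / c) * (n + 1)"
    using mult_mono[of 1 "1 + M/c" 1 "n+1"] Mc n by simp
  have "\<bar>2 * a * g - 2 * T * a\<bar> \<le> P1 + (M / c) * n * P2"
    using amgm cubic by linarith
  also have "\<dots> \<le> (1 + M / c) * (n + 1) * P1 + (1 + M / c) * (n + 1) * P2"
    using mult_right_mono[OF one P1] Mc n P2 by (intro add_mono mult_right_mono mult_mono) auto
  also have "\<dots> = (1 + M / c) * (n + 1) * (P1 + P2)"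
    by (simp add: distrib_left)
  finally show ?thesis
    unfolding P1_def P2_def by simp
qed

definition third_partials_abs_sum :: "(real^3 \<Rightarrow> real) \<Rightarrow> real^3 \<Rightarrow> real" where
  "third_partials_abs_sum \<xi> y = (\<Sum>i\<in>UNIV. \<Sum>j\<in>UNIV. \<Sum>k\<in>UNIV. \<bar>iter_partial [k, j, i] \<xi> y\<bar>)"

lemma smooth3_continuous_iter_partial:
  assumes "smooth3 \<xi>"
  shows "continuous_on UNIV (iter_partial is \<xi>)"
  using assms unfolding smooth3_def
  by (auto intro!: continuous_at_imp_continuous_on differentiable_imp_continuous_within)

lemma third_partials_bounded_on_compact:
  assumes "smooth3 \<xi>" and "compact S"
  obtains B where "B \<ge> 0" and "\<And>y. y \<in> S \<Longrightarrow> third_partials_abs_sum \<xi> y \<le> B"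
proof -
  have "continuous_on S (third_partials_abs_sum \<xi>)"
    unfolding third_partials_abs_sum_def
    by (intro continuous_intros continuous_on_subset[OF smooth3_continuous_iter_partial[OF assms(1)]])
      auto
  then have "bounded (third_partials_abs_sum \<xi> ` S)"
    using assms(2) by (intro compact_imp_bounded compact_continuous_image)
  then obtain B where "B > 0" "\<forall>z\<in>third_partials_abs_sum \<xi> ` S. norm z \<le> B"
    unfolding bounded_pos by blast
  then show ?thesis
    using that[of B] by fastforce
qed

lemma closure_sublevel_le:
  assumes "smooth3 \<xi>" and "y \<in> closure {y. \<xi> y < 0}"
  shows "\<xi> y \<le> 0"
proof -
  have "continuous_on UNIV \<xi>"
    using smooth3_continuous_iter_partial[OF assms(1), of "[]"] by simp
  then have "closed {y. \<xi> y \<le> 0}"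
    by (simp add: closed_Collect_le)
  then have "closure {y. \<xi> y < 0} \<subseteq> {y. \<xi> y \<le> 0}"
    by (intro closure_minimal) auto
  then show ?thesis
    using assms(2) by auto
qed

lemma abs_alpha_derivative_le_on_domain:
  fixes x v :: "real^3"
  assumes "smooth3 \<xi>" and "c > 0"
    and convex: "\<And>y \<zeta>. \<xi> y \<le> 0 \<Longrightarrow> \<zeta> \<bullet> (hess3 \<xi> y *v \<zeta>) \<ge> c * (norm \<zeta>)^2"
    and B: "B \<ge> 0" "third_partials_abs_sum \<xi> (x + (s - t) *\<^sub>R v) \<le> B"
    and inside: "\<xi> (x + (s - t) *\<^sub>R v) \<le> 0"
  obtains D where "((\<lambda>s. alpha \<xi> x t v s) has_real_derivative D) (at s)"
    and "\<bar>D\<bar> \<le> (1 + B / c) * (norm v + 1) * alpha \<xi> x t v s"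
proof -
  let ?X = "x + (s - t) *\<^sub>R v"
  define q where "q = (\<Sum>i\<in>UNIV. v$i * (\<Sum>j\<in>UNIV. v$j * iter_partial [j, i] \<xi> ?X))"
  define T where "T = (\<Sum>i\<in>UNIV. v$i * (\<Sum>j\<in>UNIV. v$j * (\<Sum>k\<in>UNIV. v$k * iter_partial [k, j, i] \<xi> ?X)))"
  define g where "g = (\<Sum>i\<in>UNIV. v$i * iter_partial [i] \<xi> ?X)"
  have q: "q \<ge> c * (norm v)^2"
    using convex[OF inside, of v] by (simp add: hess3_quadratic_form q_def)
  have "\<bar>T\<bar> \<le> (norm v)^3 * third_partials_abs_sum \<xi> ?X"
    unfolding T_def third_partials_abs_sum_def by (rule abs_cubic_form_le)
  also have "\<dots> \<le> B * (norm v)^3"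
    using mult_right_mono[OF B(2), of "(norm v)^3"] by (simp add: mult.commute)
  finally have T: "\<bar>T\<bar> \<le> B * (norm v)^3" .
  show ?thesis
  proof
    show "((\<lambda>s. alpha \<xi> x t v s) has_real_derivative 2 * \<xi> ?X * g - 2 * T * \<xi> ?X) (at s)"
      unfolding g_def T_def by (rule alpha_has_real_derivative[OF assms(1)])
    show "\<bar>2 * \<xi> ?X * g - 2 * T * \<xi> ?X\<bar> \<le> (1 + B / c) * (norm v + 1) * alpha \<xi> x t v s"
      using abs_alpha_derivative_le[OF inside q \<open>c > 0\<close> T B(1) norm_ge_zero]
      by (simp add: alpha_eq_sums q_def g_def)
  qed
qed

theorem mainTheorem10:
  fixes \<xi> :: "real^3 \<Rightarrow> real"
  assumes smooth: "smooth3 \<xi>"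
    and conn: "connected {x. \<xi> x < 0}"
    and bdd: "bounded {x. \<xi> x < 0}"
    and nondeg: "\<forall>x. \<xi> x = 0 \<longrightarrow> grad3 \<xi> x \<noteq> 0"
    and convex: "strictly_convex_domain \<xi>"
  shows "\<exists>C>0. \<forall>x v t t1 t2. t1 \<le> t2 \<and>
            (\<forall>s\<in>{t1..t2}. x + (s - t) *\<^sub>R v \<in> closure {y. \<xi> y < 0}) \<longrightarrow>
              exp (C * (norm v + 1) * t1) * alpha \<xi> x t v t1
                \<le> exp (C * (norm v + 1) * t2) * alpha \<xi> x t v t2
            \<and> exp (- C * (norm v + 1) * t1) * alpha \<xi> x t v t1
                \<ge> exp (- C * (norm v + 1) * t2) * alpha \<xi> x t v t2"
proof -
  obtain c where c: "c > 0"
    and hess: "\<And>y \<zeta>. \<xi> y \<le> 0 \<Longrightarrow> \<zeta> \<bullet> (hess3 \<xi> y *v \<zeta>) \<ge> c * (norm \<zeta>)^2"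
    using convex unfolding strictly_convex_domain_def by blast
  obtain B where B: "B \<ge> 0"
    and third: "\<And>y. y \<in> closure {y. \<xi> y < 0} \<Longrightarrow> third_partials_abs_sum \<xi> y \<le> B"
    using third_partials_bounded_on_compact[OF smooth] bdd compact_closure by blast
  define C where "C = 1 + B / c"
  have "C > 0"
    unfolding C_def using B c by (simp add: add_pos_nonneg)
  moreover have "exp (K * t1) * alpha \<xi> x t v t1 \<le> exp (K * t2) * alpha \<xi> x t v t2
      \<and> exp (- K * t1) * alpha \<xi> x t v t1 \<ge> exp (- K * t2) * alpha \<xi> x t v t2"
    if K: "K = C * (norm v + 1)" and "t1 \<le> t2"
      and path: "\<forall>s\<in>{t1..t2}. x + (s - t) *\<^sub>R v \<in> closure {y. \<xi> y < 0}" for x v t t1 t2 K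
  proof -
    have "\<exists>D. ((\<lambda>s. alpha \<xi> x t v s) has_real_derivative D) (at s) \<and> \<bar>D\<bar> \<le> K * alpha \<xi> x t v s"
      if "t1 \<le> s" "s \<le> t2" for s
      using that path abs_alpha_derivative_le_on_domain[OF smooth c hess B third closure_sublevel_le[OF smooth]]
      unfolding K C_def by (metis atLeastAtMost_iff)
    then obtain D where "\<And>s. t1 \<le> s \<Longrightarrow> s \<le> t2 \<Longrightarrow>
        ((\<lambda>s. alpha \<xi> x t v s) has_real_derivative D s) (at s) \<and> \<bar>D s\<bar> \<le> K * alpha \<xi> x t v s"
      by metis
    then show ?thesis
      using exp_weighted_monotone[OF \<open>t1 \<le> t2\<close>, of "alpha \<xi> x t v" D K] by blast
  qed
  ultimately show ?thesis
    by (intro exI[of _ C]) simp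
qed

end
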